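(* Suppose $F$ is symmetric ($F(-i)=1-F(i)$ for all $i$), let $R\in(0,1)$, $\beta=F(1/2-R)$, $Q=(q_1+q_2)/2$ and $\sigma=q_H/q_L$. Then $\pi^B=\frac{(1-2Q)\sigma}{1+\sigma}+2Q\beta$, $\Delta_O^B=\frac{\beta Q(\sigma+1)-2Q\sigma+\sigma}{2\beta Q(\sigma+1)-2Q\sigma+\sigma}-\frac{(1-2Q)\sigma}{1+\sigma}-Q$, and the value of the recommendation system is $V(\beta)=\pi^B\Delta_O^B=(1-2Q)\frac{\sigma+Q\left(\beta-\sigma+\sigma^2(1-\beta)\right)}{(\sigma+1)^2}$.
   Context: Setting. Consumer types are $i\in[-1/2,1/2]$, distributed according to a continuous cumulative distribution function $F$ with full support on $[-1/2,1/2]$. A product has a quality vector $(Q_1,Q_2)\in\{0,1\}^2$; a type-$i$ consumer gets payoff $(1/2+i)Q_1+(1/2-i)Q_2$ from it. The versions $(1,1),(1,0),(0,1),(0,0)$ have prior probabilities $q_H,q_1,q_2,q_L$ respectively, all strictly positive and summing to $1$. Given a threshold $R\in(0,1)$, a sender whose type is drawn from $F$ independently of the product gives a buy recommendation $B$ if her payoff from the product is at least $R$ and a don't-buy recommendation $D$ otherwise. Let $\phi_1(R)=1-F(R-1/2)$, $\phi_2(R)=F(1/2-R)$, $\pi^B=q_H+q_1\phi_1(R)+q_2\phi_2(R)$, $\pi^D=1-\pi^B$. Posteriors: $p^B_H=q_H/\pi^B$, $p^B_1=q_1\phi_1(R)/\pi^B$, $p^B_2=q_2\phi_2(R)/\pi^B$;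 $p^D_H=0$, $p^D_1=q_1(1-\phi_1(R))/\pi^D$, $p^D_2=q_2(1-\phi_2(R))/\pi^D$. Let $U_i^r=p_H^r+(1/2+i)p_1^r+(1/2-i)p_2^r$ for $r\in\{B,D\}$ and $U_i^0=q_H+(1/2+i)q_1+(1/2-i)q_2$. The objective effect of the buy recommendation is $\Delta_O^B=p_H^B-q_H+\frac{p_1^B-q_1}{2}+\frac{p_2^B-q_2}{2}$. The value of the recommendation system is $V=\pi^B\int_{-1/2}^{1/2}\max\{U_i^B-U_i^0,0\}\,dF(i)+\pi^D\int_{-1/2}^{1/2}\max\{U_i^D-U_i^0,0\}\,dF(i)$. *)

theory Defs
  imports "HOL-Analysis.Analysis"
begin

definition type_cdf :: "(real \<Rightarrow> real) \<Rightarrow> bool" where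
  "type_cdf F \<longleftrightarrow> mono F \<and> continuous_on UNIV F
     \<and> (\<forall>x. x \<le> -1/2 \<longrightarrow> F x = 0) \<and> (\<forall>x. x \<ge> 1/2 \<longrightarrow> F x = 1)
     \<and> strict_mono_on {-1/2..1/2} F"

definition phi1 :: "(real \<Rightarrow> real) \<Rightarrow> real \<Rightarrow> real" where
  "phi1 F R = 1 - F (R - 1/2)"
definition phi2 :: "(real \<Rightarrow> real) \<Rightarrow> real \<Rightarrow> real" where
  "phi2 F R = F (1/2 - R)"

definition piB :: "(real \<Rightarrow> real) \<Rightarrow> real \<Rightarrow> real \<Rightarrow> real \<Rightarrow> real \<Rightarrow> real" where
  "piB F qH q1 q2 R = qH + q1 * phi1 F R + q2 * phi2 F R"
definition piD :: "(real \<Rightarrow> real) \<Rightarrow> real \<Rightarrow> real \<Rightarrow> real \<Rightarrow> real \<Rightarrow> real" where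
  "piD F qH q1 q2 R = 1 - piB F qH q1 q2 R"

definition pBH where "pBH F qH q1 q2 R = qH / piB F qH q1 q2 R"
definition pB1 where "pB1 F qH q1 q2 R = q1 * phi1 F R / piB F qH q1 q2 R"
definition pB2 where "pB2 F qH q1 q2 R = q2 * phi2 F R / piB F qH q1 q2 R"
definition pDH :: real where "pDH = 0"
definition pD1 where "pD1 F qH q1 q2 R = q1 * (1 - phi1 F R) / piD F qH q1 q2 R"
definition pD2 where "pD2 F qH q1 q2 R = q2 * (1 - phi2 F R) / piD F qH q1 q2 R"

definition UB :: "(real \<Rightarrow> real) \<Rightarrow> real \<Rightarrow> real \<Rightarrow> real \<Rightarrow> real \<Rightarrow> real \<Rightarrow> real" where
  "UB F qH q1 q2 R i = pBH F qH q1 q2 R + (1/2 + i) * pB1 F qH q1 q2 R + (1/2 - i) * pB2 F qH q1 q2 R"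
definition UD :: "(real \<Rightarrow> real) \<Rightarrow> real \<Rightarrow> real \<Rightarrow> real \<Rightarrow> real \<Rightarrow> real \<Rightarrow> real" where
  "UD F qH q1 q2 R i = pDH + (1/2 + i) * pD1 F qH q1 q2 R + (1/2 - i) * pD2 F qH q1 q2 R"
definition U0 :: "real \<Rightarrow> real \<Rightarrow> real \<Rightarrow> real \<Rightarrow> real" where
  "U0 qH q1 q2 i = qH + (1/2 + i) * q1 + (1/2 - i) * q2"

definition DeltaOB :: "(real \<Rightarrow> real) \<Rightarrow> real \<Rightarrow> real \<Rightarrow> real \<Rightarrow> real \<Rightarrow> real" where
  "DeltaOB F qH q1 q2 R = pBH F qH q1 q2 R - qH + (pB1 F qH q1 q2 R - q1) / 2
                          + (pB2 F qH q1 q2 R - q2) / 2"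

text \<open>Value of the recommendation system; integration against dF is the
  Lebesgue-Stieltjes integral w.r.t. the measure induced by F.\<close>
definition Vsys :: "(real \<Rightarrow> real) \<Rightarrow> real \<Rightarrow> real \<Rightarrow> real \<Rightarrow> real \<Rightarrow> real" where
  "Vsys F qH q1 q2 R =
     piB F qH q1 q2 R * (LINT i:{-1/2..1/2}|interval_measure F. max (UB F qH q1 q2 R i - U0 qH q1 q2 i) 0)
   + piD F qH q1 q2 R * (LINT i:{-1/2..1/2}|interval_measure F. max (UD F qH q1 q2 R i - U0 qH q1 q2 i) 0)"

end

theory Submission
  imports Defs "HOL-Probability.Probability"
begin

text \<open>
  Under symmetry a type-1 and a type-2 product are recommended with the same probability
  \<open>\<beta> = F (1/2 - R)\<close>, so all posteriors are explicit in the priors and \<open>\<beta>\<close>.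
  The gain \<open>U\<^sup>B\<^sub>i - U\<^sup>0\<^sub>i\<close> of a buy recommendation is affine in \<open>i\<close> and
  non-negative at both extreme types, hence for every type; by Bayes plausibility
  (\<open>\<pi>\<^sup>B U\<^sup>B\<^sub>i + \<pi>\<^sup>D U\<^sup>D\<^sub>i = U\<^sup>0\<^sub>i\<close>) a don't-buy recommendation
  then never helps. So \<open>V = \<pi>\<^sup>B \<integral> (U\<^sup>B\<^sub>i - U\<^sup>0\<^sub>i) dF(i)\<close>, and as the reflection
  \<open>i \<mapsto> -i\<close> preserves the type distribution, the integral of this affine function is its value
  at \<open>i = 0\<close>, which is \<open>\<Delta>\<^sub>O\<^sup>B\<close>. The closed forms follow by writing
  \<open>q\<^sub>H = (1 - 2Q) \<sigma> / (1 + \<sigma>)\<close>.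
\<close>

lemma type_cdf_mono: "type_cdf F \<Longrightarrow> x \<le> y \<Longrightarrow> F x \<le> F y"
  unfolding type_cdf_def by (simp add: monoD)

lemma type_cdf_isCont: "type_cdf F \<Longrightarrow> isCont F x"
  unfolding type_cdf_def by (simp add: continuous_on_eq_continuous_at)

lemma type_cdf_nonneg:
  assumes "type_cdf F" shows "0 \<le> F x"
proof -
  have "F (min x (-1/2)) \<le> F x" using assms by (simp add: type_cdf_mono)
  moreover have "F (min x (-1/2)) = 0" using assms unfolding type_cdf_def by simp
  ultimately show ?thesis by simp
qed

lemma type_cdf_le_one:
  assumes "type_cdf F" shows "F x \<le> 1"
proof -
  have "F x \<le> F (max x (1/2))" using assms by (simp add: type_cdf_mono)
  moreover have "F (max x (1/2)) = 1" using assms unfolding type_cdf_def by simp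
  ultimately show ?thesis by simp
qed

lemma type_cdf_tendsto_at_bot: "type_cdf F \<Longrightarrow> (F \<longlongrightarrow> 0) at_bot"
  unfolding type_cdf_def
  by (intro tendsto_eventually) (auto simp: eventually_at_bot_linorder intro!: exI[of _ "-1/2"])

lemma type_cdf_tendsto_at_top: "type_cdf F \<Longrightarrow> (F \<longlongrightarrow> 1) at_top"
  unfolding type_cdf_def
  by (intro tendsto_eventually) (auto simp: eventually_at_top_linorder intro!: exI[of _ "1/2"])

lemma type_cdf_right_continuous: "type_cdf F \<Longrightarrow> continuous (at_right a) F"
  by (simp add: type_cdf_isCont continuous_at_imp_continuous_at_within)

lemma real_distribution_interval_measure_type_cdf:
  "type_cdf F \<Longrightarrow> real_distribution (interval_measure F)"
  by (simp add: real_distribution_interval_measure type_cdf_mono type_cdf_right_continuous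
      type_cdf_tendsto_at_bot type_cdf_tendsto_at_top)

lemma cdf_interval_measure_type_cdf: "type_cdf F \<Longrightarrow> cdf (interval_measure F) = F"
  by (simp add: cdf_interval_measure type_cdf_mono type_cdf_right_continuous
      type_cdf_tendsto_at_bot)

lemma measure_interval_measure_type_cdf:
  assumes "type_cdf F" shows "measure (interval_measure F) {-1/2..1/2} = 1"
proof -
  have "emeasure (interval_measure F) {-1/2..1/2} = F (1/2) - F (-1/2)"
    using assms by (simp add: emeasure_interval_measure_Icc type_cdf_mono type_cdf_def)
  also have "F (1/2) - F (-1/2) = 1" using assms by (simp add: type_cdf_def)
  finally show ?thesis by (simp add: measure_def)
qed

lemma (in real_distribution) measure_lessThan_eq_cdf:
  assumes "isCont (cdf M) x" shows "measure M {..<x} = cdf M x"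
proof -
  have "{..x} = {..<x} \<union> {x}" by auto
  then have "cdf M x = measure M ({..<x} \<union> {x})"
    by (simp add: cdf_def2)
  also have "\<dots> = measure M {..<x} + measure M {x}"
    by (rule finite_measure_Union) auto
  finally show ?thesis using assms by (simp add: isCont_cdf)
qed

lemma (in real_distribution) distr_uminus_eq_if_symmetric_cdf:
  assumes cont: "\<And>x. isCont (cdf M) x" and sym: "\<And>x. cdf M (- x) = 1 - cdf M x"
  shows "distr M borel uminus = M"
proof (rule cdf_unique)
  show "real_distribution (distr M borel uminus)" by simp
  show "cdf (distr M borel uminus) = cdf M"
  proof
    fix x
    have "cdf (distr M borel uminus) x = measure M (space M - {..< -x})"
      unfolding cdf_def by (subst measure_distr) (auto intro!: arg_cong[where f="measure M"])
    also have "\<dots> = 1 - measure M {..< -x}"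
      by (rule prob_compl) simp
    also have "\<dots> = 1 - cdf M (- x)"
      by (simp add: measure_lessThan_eq_cdf cont)
    finally show "cdf (distr M borel uminus) x = cdf M x" by (simp add: sym)
  qed
qed (rule real_distribution_axioms)

lemma integral_odd_eq_0:
  fixes g :: "real \<Rightarrow> real"
  assumes M: "distr M borel uminus = M" and g: "g \<in> borel_measurable borel"
    and odd: "\<And>x. g (- x) = - g x"
  shows "integral\<^sup>L M g = 0"
proof -
  have "sets M = sets borel" by (metis M sets_distr)
  then have uminus: "uminus \<in> borel_measurable M"
    by (simp add: measurable_cong_sets[of M borel borel borel])
  have "integral\<^sup>L M g = integral\<^sup>L (distr M borel uminus) g" by (simp only: M)
  also have "\<dots> = integral\<^sup>L M (\<lambda>x. g (- x))" by (rule integral_distr[OF uminus g])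
  finally show ?thesis by (simp add: odd)
qed

lemma set_integral_affine_symmetric:
  fixes M :: "real measure"
  assumes "finite_measure M" and M: "distr M borel uminus = M"
  shows "(LINT x:{-c..c}|M. a + b * x) = measure M {-c..c} * a"
proof -
  have sets: "sets M = sets borel" by (metis M sets_distr)
  then have meas: "borel_measurable M = borel_measurable borel"
    by (rule measurable_cong_sets) simp
  have int_id: "set_integrable M {-c..c} (\<lambda>x. x)"
    unfolding set_integrable_def
    by (rule finite_measure.integrable_const_bound[OF assms(1), where B="\<bar>c\<bar>"])
      (auto simp: indicator_def meas)
  have int_const: "set_integrable M {-c..c} (\<lambda>x. a)"
    unfolding set_integrable_def
    by (rule finite_measure.integrable_const_bound[OF assms(1), where B="\<bar>a\<bar>"])
      (auto simp: indicator_def meas)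
  have "(LINT x:{-c..c}|M. x) = 0"
    unfolding set_lebesgue_integral_def
    by (rule integral_odd_eq_0[OF M]) (auto simp: indicator_def)
  moreover have "(LINT x:{-c..c}|M. a + b * x) = (LINT x:{-c..c}|M. a) + b * (LINT x:{-c..c}|M. x)"
    using set_integral_add(2)[OF int_const set_integrable_mult_right[OF int_id]] by simp
  moreover have "(LINT x:{-c..c}|M. a) = measure M {-c..c} * a"
    using finite_measure.emeasure_finite[OF assms(1)] by (simp add: set_integral_const sets)
  ultimately show ?thesis by simp
qed

lemma set_integral_affine_type_cdf:
  assumes cdf: "type_cdf F" and sym: "\<forall>i. F (- i) = 1 - F i"
  shows "(LINT i:{-1/2..1/2}|interval_measure F. a + b * i) = a"
proof -
  interpret real_distribution "interval_measure F"
    using cdf by (rule real_distribution_interval_measure_type_cdf)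
  have "distr (interval_measure F) borel uminus = interval_measure F"
    using cdf sym by (intro distr_uminus_eq_if_symmetric_cdf)
      (simp_all add: cdf_interval_measure_type_cdf type_cdf_isCont)
  from set_integral_affine_symmetric[OF finite_measure_axioms this, of "1/2"] show ?thesis
    using measure_interval_measure_type_cdf[OF cdf] by simp
qed

lemma phi1_eq_phi2_if_symmetric:
  assumes "\<forall>i. F (- i) = 1 - F i"
  shows "phi1 F R = phi2 F R"
  using assms[rule_format, of "R - 1/2"] by (simp add: phi1_def phi2_def)

lemma bayes_plausibility:
  assumes "piB F qH q1 q2 R \<noteq> 0" and "piD F qH q1 q2 R \<noteq> 0"
  shows "piB F qH q1 q2 R * UB F qH q1 q2 R i + piD F qH q1 q2 R * UD F qH q1 q2 R i
    = U0 qH q1 q2 i"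
  using assms
  by (simp add: UB_def UD_def U0_def pBH_def pB1_def pB2_def pDH_def pD1_def pD2_def
      field_simps)

lemma UB_minus_U0_affine:
  "UB F qH q1 q2 R i - U0 qH q1 q2 i
     = DeltaOB F qH q1 q2 R + i * ((pB1 F qH q1 q2 R - q1) - (pB2 F qH q1 q2 R - q2))"
  by (simp add: UB_def U0_def DeltaOB_def field_simps)

context
  fixes F :: "real \<Rightarrow> real" and qH q1 q2 qL R \<beta> :: real
  assumes pos: "qH > 0" "q1 > 0" "q2 > 0" "qL > 0"
    and sum1: "qH + q1 + q2 + qL = 1"
    and phi: "phi1 F R = \<beta>" "phi2 F R = \<beta>"
    and \<beta>: "0 \<le> \<beta>" "\<beta> \<le> 1"
begin

lemma piB_eq_beta: "piB F qH q1 q2 R = qH + (q1 + q2) * \<beta>"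
  by (simp add: piB_def phi algebra_simps)

lemma piD_eq_beta: "piD F qH q1 q2 R = qL + (q1 + q2) * (1 - \<beta>)"
  using sum1 by (simp add: piD_def piB_eq_beta algebra_simps)

lemma piB_pos: "piB F qH q1 q2 R > 0"
  using pos \<beta> by (simp add: piB_eq_beta add_pos_nonneg)

lemma piD_pos: "piD F qH q1 q2 R > 0"
  using pos \<beta> by (simp add: piD_eq_beta add_pos_nonneg)

lemma DeltaOB_eq_beta:
  "DeltaOB F qH q1 q2 R = (qH + (q1 + q2) / 2 * \<beta>) / piB F qH q1 q2 R - qH - (q1 + q2) / 2"
  using piB_pos by (simp add: DeltaOB_def pBH_def pB1_def pB2_def phi field_simps)

lemma UB_eq_beta:
  "UB F qH q1 q2 R i = (qH + (1/2 + i) * q1 * \<beta> + (1/2 - i) * q2 * \<beta>) / piB F qH q1 q2 R"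
  by (simp add: UB_def pBH_def pB1_def pB2_def phi add_divide_distrib)

lemma UB_minus_U0_eq_beta:
  "UB F qH q1 q2 R i - U0 qH q1 q2 i
     = ((1/2 + i) * (qH * qL + qH * q2 * (1 - \<beta>) + q1 * qL * \<beta>)
        + (1/2 - i) * (qH * qL + qH * q1 * (1 - \<beta>) + q2 * qL * \<beta>)) / piB F qH q1 q2 R"
proof -
  have "piB F qH q1 q2 R \<noteq> 0" using piB_pos by simp
  then have "UB F qH q1 q2 R i - U0 qH q1 q2 i
     = (qH + (1/2 + i) * q1 * \<beta> + (1/2 - i) * q2 * \<beta> - U0 qH q1 q2 i * piB F qH q1 q2 R)
       / piB F qH q1 q2 R"
    unfolding UB_eq_beta by (rule divide_diff_eq_iff)
  also have "qH + (1/2 + i) * q1 * \<beta> + (1/2 - i) * q2 * \<beta> - U0 qH q1 q2 i * piB F qH q1 q2 R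
     = (1/2 + i) * (qH * qL + qH * q2 * (1 - \<beta>) + q1 * qL * \<beta>)
        + (1/2 - i) * (qH * qL + qH * q1 * (1 - \<beta>) + q2 * qL * \<beta>)"
    using sum1 unfolding piB_eq_beta U0_def by algebra
  finally show ?thesis .
qed

lemma U0_le_UB:
  assumes "i \<in> {-1/2..1/2}"
  shows "U0 qH q1 q2 i \<le> UB F qH q1 q2 R i"
proof -
  have "0 \<le> 1/2 + i" "0 \<le> 1/2 - i" using assms by auto
  moreover have "0 \<le> qH * qL + qH * q2 * (1 - \<beta>) + q1 * qL * \<beta>"
    and "0 \<le> qH * qL + qH * q1 * (1 - \<beta>) + q2 * qL * \<beta>"
    using pos \<beta> by simp_all
  ultimately have "0 \<le> UB F qH q1 q2 R i - U0 qH q1 q2 i"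
    unfolding UB_minus_U0_eq_beta
    by (metis piB_pos add_nonneg_nonneg mult_nonneg_nonneg divide_nonneg_pos)
  then show ?thesis by simp
qed

lemma UD_le_U0:
  assumes "i \<in> {-1/2..1/2}"
  shows "UD F qH q1 q2 R i \<le> U0 qH q1 q2 i"
proof -
  have "piD F qH q1 q2 R * (UD F qH q1 q2 R i - U0 qH q1 q2 i)
      = - piB F qH q1 q2 R * (UB F qH q1 q2 R i - U0 qH q1 q2 i)"
    using bayes_plausibility[of F qH q1 q2 R i] piB_pos piD_pos
    by (simp add: piD_def algebra_simps)
  also have "\<dots> \<le> 0"
    using U0_le_UB[OF assms] piB_pos by simp
  finally show ?thesis
    using piD_pos by (simp add: mult_le_0_iff)
qed

end

lemma Vsys_eq_piB_mult_DeltaOB: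
  assumes cdf: "type_cdf F" and sym: "\<forall>i. F (- i) = 1 - F i"
    and buy: "\<And>i. i \<in> {-1/2..1/2} \<Longrightarrow> U0 qH q1 q2 i \<le> UB F qH q1 q2 R i"
    and dont_buy: "\<And>i. i \<in> {-1/2..1/2} \<Longrightarrow> UD F qH q1 q2 R i \<le> U0 qH q1 q2 i"
  shows "Vsys F qH q1 q2 R = piB F qH q1 q2 R * DeltaOB F qH q1 q2 R"
proof -
  let ?slope = "(pB1 F qH q1 q2 R - q1) - (pB2 F qH q1 q2 R - q2)"
  have "max (UB F qH q1 q2 R i - U0 qH q1 q2 i) 0 = DeltaOB F qH q1 q2 R + ?slope * i"
    if "i \<in> {-1/2..1/2}" for i
    using buy[OF that] UB_minus_U0_affine[of F qH q1 q2 R i] by (simp add: mult.commute)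
  then have "(LINT i:{-1/2..1/2}|interval_measure F. max (UB F qH q1 q2 R i - U0 qH q1 q2 i) 0)
      = (LINT i:{-1/2..1/2}|interval_measure F. DeltaOB F qH q1 q2 R + ?slope * i)"
    by (intro set_lebesgue_integral_cong) simp_all
  also have "\<dots> = DeltaOB F qH q1 q2 R"
    by (rule set_integral_affine_type_cdf[OF cdf sym])
  moreover have "(LINT i:{-1/2..1/2}|interval_measure F. max (UD F qH q1 q2 R i - U0 qH q1 q2 i) 0)
      = (LINT i:{-1/2..1/2}|interval_measure F. 0)"
    using dont_buy by (intro set_lebesgue_integral_cong) auto
  ultimately show ?thesis by (simp add: Vsys_def)
qed

lemma odds_reparametrisation:
  fixes qH qL Q \<sigma> :: real
  assumes "qL > 0" "qH \<ge> 0" "\<sigma> = qH / qL" "1 - 2 * Q = qH + qL"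
  shows "qH = (1 - 2 * Q) * \<sigma> / (1 + \<sigma>)" and "\<sigma> \<ge> 0"
proof -
  show "\<sigma> \<ge> 0" using assms by simp
  have "(1 - 2 * Q) * \<sigma> = qH * \<sigma> + qL * \<sigma>"
    using assms(4) by (simp add: distrib_right)
  also have "qL * \<sigma> = qH" using assms by simp
  finally have "(1 - 2 * Q) * \<sigma> = qH * (1 + \<sigma>)" by (simp add: algebra_simps)
  then show "qH = (1 - 2 * Q) * \<sigma> / (1 + \<sigma>)" using \<open>\<sigma> \<ge> 0\<close> by simp
qed

context
  fixes qH Q \<beta> \<sigma> :: real
  assumes \<sigma>: "\<sigma> \<ge> 0" and qH: "qH = (1 - 2 * Q) * \<sigma> / (1 + \<sigma>)"
begin

lemma odds_scaled: "(1 + \<sigma>) * qH = (1 - 2 * Q) * \<sigma>"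
  using \<sigma> qH by simp

lemma ratio_in_odds:
  "(qH + Q * \<beta>) / (qH + 2 * Q * \<beta>)
     = (\<beta> * Q * (\<sigma> + 1) - 2 * Q * \<sigma> + \<sigma>) / (2 * \<beta> * Q * (\<sigma> + 1) - 2 * Q * \<sigma> + \<sigma>)"
proof -
  have "\<beta> * Q * (\<sigma> + 1) - 2 * Q * \<sigma> + \<sigma> = (1 + \<sigma>) * (qH + Q * \<beta>)"
    and "2 * \<beta> * Q * (\<sigma> + 1) - 2 * Q * \<sigma> + \<sigma> = (1 + \<sigma>) * (qH + 2 * Q * \<beta>)"
    using odds_scaled by (simp_all add: algebra_simps)
  then show ?thesis using \<sigma> by simp
qed

lemma value_in_odds:
  "qH + Q * \<beta> - (qH + 2 * Q * \<beta>) * (qH + Q)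
     = (1 - 2 * Q) * (\<sigma> + Q * (\<beta> - \<sigma> + \<sigma>\<^sup>2 * (1 - \<beta>))) / (\<sigma> + 1)\<^sup>2"
proof -
  have "(qH + Q * \<beta> - (qH + 2 * Q * \<beta>) * (qH + Q)) * (\<sigma> + 1)\<^sup>2
      = (1 - 2 * Q) * (\<sigma> + Q * (\<beta> - \<sigma> + \<sigma>\<^sup>2 * (1 - \<beta>)))"
    using odds_scaled by algebra
  then show ?thesis using \<sigma> by (simp add: eq_divide_eq)
qed

end

theorem lemma1:
  fixes F :: "real \<Rightarrow> real" and qH q1 q2 qL R \<beta> Q \<sigma> :: real
  assumes cdf: "type_cdf F"
    and sym: "\<forall>i. F (- i) = 1 - F i"
    and pos: "qH > 0" "q1 > 0" "q2 > 0" "qL > 0"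
    and sum1: "qH + q1 + q2 + qL = 1"
    and R: "0 < R" "R < 1"
    and \<beta>_def: "\<beta> = F (1/2 - R)"
    and Q_def: "Q = (q1 + q2) / 2"
    and \<sigma>_def: "\<sigma> = qH / qL"
  shows "piB F qH q1 q2 R = (1 - 2*Q) * \<sigma> / (1 + \<sigma>) + 2 * Q * \<beta>
    \<and> DeltaOB F qH q1 q2 R =
           (\<beta> * Q * (\<sigma> + 1) - 2 * Q * \<sigma> + \<sigma>) / (2 * \<beta> * Q * (\<sigma> + 1) - 2 * Q * \<sigma> + \<sigma>)
           - (1 - 2*Q) * \<sigma> / (1 + \<sigma>) - Q
    \<and> Vsys F qH q1 q2 R = piB F qH q1 q2 R * DeltaOB F qH q1 q2 R
    \<and> piB F qH q1 q2 R * DeltaOB F qH q1 q2 R =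
           (1 - 2*Q) * (\<sigma> + Q * (\<beta> - \<sigma> + \<sigma>^2 * (1 - \<beta>))) / (\<sigma> + 1)^2"
proof -
  have \<beta>_phi: "phi1 F R = \<beta>" "phi2 F R = \<beta>"
    using phi1_eq_phi2_if_symmetric[OF sym] by (simp_all add: phi2_def \<beta>_def)
  have \<beta>_range: "0 \<le> \<beta>" "\<beta> \<le> 1"
    using cdf by (simp_all add: \<beta>_def type_cdf_nonneg type_cdf_le_one)
  note model = pos sum1 \<beta>_phi \<beta>_range
  have "1 - 2 * Q = qH + qL" using sum1 Q_def by simp
  note odds = odds_reparametrisation[OF pos(4) less_imp_le[OF pos(1)] \<sigma>_def this]
  have piB: "piB F qH q1 q2 R = qH + 2 * Q * \<beta>"
    using piB_eq_beta[OF model] unfolding Q_def by simp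
  have DeltaOB: "DeltaOB F qH q1 q2 R = (qH + Q * \<beta>) / piB F qH q1 q2 R - qH - Q"
    using DeltaOB_eq_beta[OF model] unfolding Q_def by simp
  have piB_DeltaOB:
    "piB F qH q1 q2 R * DeltaOB F qH q1 q2 R = qH + Q * \<beta> - (qH + 2 * Q * \<beta>) * (qH + Q)"
    using piB_pos[OF model] unfolding DeltaOB piB by (simp add: field_simps)
  show ?thesis
  proof (intro conjI)
    show "piB F qH q1 q2 R = (1 - 2*Q) * \<sigma> / (1 + \<sigma>) + 2 * Q * \<beta>"
      using piB odds(1) by simp
    show "DeltaOB F qH q1 q2 R =
           (\<beta> * Q * (\<sigma> + 1) - 2 * Q * \<sigma> + \<sigma>) / (2 * \<beta> * Q * (\<sigma> + 1) - 2 * Q * \<sigma> + \<sigma>)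
           - (1 - 2*Q) * \<sigma> / (1 + \<sigma>) - Q"
      unfolding DeltaOB piB ratio_in_odds[OF odds(2,1), symmetric] using odds(1) by simp
    show "Vsys F qH q1 q2 R = piB F qH q1 q2 R * DeltaOB F qH q1 q2 R"
      by (rule Vsys_eq_piB_mult_DeltaOB[OF cdf sym U0_le_UB[OF model] UD_le_U0[OF model]])
    show "piB F qH q1 q2 R * DeltaOB F qH q1 q2 R =
           (1 - 2*Q) * (\<sigma> + Q * (\<beta> - \<sigma> + \<sigma>^2 * (1 - \<beta>))) / (\<sigma> + 1)^2"
      unfolding piB_DeltaOB by (rule value_in_odds[OF odds(2,1)])
  qed
qed

end
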